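(* Let $a<b<c$ be elements of $\mathcal{C}_n$ and let $\triangle=\triangle^{(n)}\{a,b,c\}$. Let $L_{par}=\{\alpha\in\triangle:\ \alpha(a)=a,\ \alpha(b)=\alpha(c)=b\}$ and $R_{par}=\{\alpha\in\triangle:\ \alpha(a)=\alpha(b)=b,\ \alpha(c)=c\}$. Then $L_{par}$ and $R_{par}$ are subsemirings of $\triangle$.
   Context: $\mathcal{C}_n=\{0,1,\dots,n-1\}$ with its usual order; $\widehat{\mathcal{E}}_{\mathcal{C}_n}$ is the set of all order-preserving maps $\mathcal{C}_n\to\mathcal{C}_n$ (not required to fix $0$), a semiring with $(\alpha+\beta)(x)=\max(\alpha(x),\beta(x))$ and $(\alpha\cdot\beta)(x)=\beta(\alpha(x))$. The triangle $\triangle^{(n)}\{a,b,c\}$ is the set of all $\alpha\in\widehat{\mathcal{E}}_{\mathcal{C}_n}$ with image in $\{a,b,c\}$. In the paper, $L_{par}$ is the set of "left elements" of the layers $\{\alpha\in\triangle: |\alpha^{-1}(a)|=k\}$, $a+1\le k\le b$, and $R_{par}$ the set of "right elements" of the layers $\{\alpha\in\triangle: |\alpha^{-1}(c)|=k\}$, $n-c\le k\le n-b-1$; these coincide with the sets described in the claim. A subsemiring is a nonempty subset closed under $+$ and $\cdot$. *)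

theory Defs
  imports Main
begin

text \<open>The chain C_n = {0,...,n-1}. An order-preserving self-map of C_n is represented
  by a function nat => nat, canonically extended by 0 outside {0..<n}.\<close>

definition endo :: "nat \<Rightarrow> (nat \<Rightarrow> nat) set" where
  "endo n = {f. (\<forall>x<n. f x < n) \<and> (\<forall>x y. x \<le> y \<and> y < n \<longrightarrow> f x \<le> f y)
                \<and> (\<forall>x\<ge>n. f x = 0)}"

definition eplus :: "nat \<Rightarrow> (nat \<Rightarrow> nat) \<Rightarrow> (nat \<Rightarrow> nat) \<Rightarrow> (nat \<Rightarrow> nat)" where
  "eplus n f g = (\<lambda>x. if x < n then max (f x) (g x) else 0)"

definition etimes :: "nat \<Rightarrow> (nat \<Rightarrow> nat) \<Rightarrow> (nat \<Rightarrow> nat) \<Rightarrow> (nat \<Rightarrow> nat)" where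
  "etimes n f g = (\<lambda>x. if x < n then g (f x) else 0)"

definition triangle :: "nat \<Rightarrow> nat \<Rightarrow> nat \<Rightarrow> nat \<Rightarrow> (nat \<Rightarrow> nat) set" where
  "triangle n a b c = {f \<in> endo n. \<forall>x<n. f x \<in> {a, b, c}}"

definition subsemiring :: "nat \<Rightarrow> (nat \<Rightarrow> nat) set \<Rightarrow> (nat \<Rightarrow> nat) set \<Rightarrow> bool" where
  "subsemiring n S T \<longleftrightarrow> S \<subseteq> T \<and> S \<noteq> {}
     \<and> (\<forall>f\<in>S. \<forall>g\<in>S. eplus n f g \<in> S \<and> etimes n f g \<in> S)"

definition Lpar :: "nat \<Rightarrow> nat \<Rightarrow> nat \<Rightarrow> nat \<Rightarrow> (nat \<Rightarrow> nat) set" where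
  "Lpar n a b c = {f \<in> triangle n a b c. f a = a \<and> f b = b \<and> f c = b}"

definition Rpar :: "nat \<Rightarrow> nat \<Rightarrow> nat \<Rightarrow> nat \<Rightarrow> (nat \<Rightarrow> nat) set" where
  "Rpar n a b c = {f \<in> triangle n a b c. f a = b \<and> f b = b \<and> f c = c}"

end

theory Submission
  imports Defs
begin

text \<open>Both sets consist of the maps of the triangle with prescribed values on \<open>{a, b, c}\<close>,
  given by an idempotent map \<open>\<phi>\<close> of \<open>{a, b, c}\<close> into itself. Such a set is closed under
  the pointwise maximum because \<open>max (\<phi> x) (\<phi> x) = \<phi> x\<close>, and under composition because
  \<open>(f \<cdot> g)(x) = g (\<phi> x) = \<phi> (\<phi> x) = \<phi> x\<close>; the triangle itself is closed, and step maps
  witness non-emptiness.\<close>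

lemma eplus_endo:
  assumes "f \<in> endo n" "g \<in> endo n"
  shows "eplus n f g \<in> endo n"
proof -
  have "max (f x) (g x) \<le> max (f y) (g y)" if "x \<le> y" "y < n" for x y
  proof (rule max.mono)
    show "f x \<le> f y" "g x \<le> g y"
      using assms that unfolding endo_def by blast+
  qed
  then show ?thesis
    using assms unfolding endo_def eplus_def by auto
qed

lemma etimes_endo:
  assumes "f \<in> endo n" "g \<in> endo n"
  shows "etimes n f g \<in> endo n"
  using assms unfolding endo_def etimes_def by auto

lemma subsemiring_triangle_endo:
  assumes "a < n"
  shows "subsemiring n (triangle n a b c) (endo n)"
proof -
  let ?T = "triangle n a b c"
  have "(\<lambda>x. if x < n then a else 0) \<in> ?T"
    using assms unfolding triangle_def endo_def by auto
  moreover have "eplus n f g \<in> ?T" if "f \<in> ?T" "g \<in> ?T" for f g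
  proof -
    have "max (f x) (g x) \<in> {f x, g x}" for x
      by (simp add: max_def)
    then show ?thesis
      using that eplus_endo[of f n g] unfolding triangle_def eplus_def by auto
  qed
  moreover have "etimes n f g \<in> ?T" if "f \<in> ?T" "g \<in> ?T" for f g
  proof -
    have "g (f x) \<in> {a, b, c}" if "x < n" for x
      using \<open>f \<in> ?T\<close> \<open>g \<in> ?T\<close> that unfolding triangle_def endo_def by blast
    then show ?thesis
      using that etimes_endo[of f n g] unfolding triangle_def etimes_def by auto
  qed
  moreover have "?T \<subseteq> endo n"
    unfolding triangle_def by blast
  ultimately show ?thesis
    unfolding subsemiring_def by blast
qed

definition prescribed :: "(nat \<Rightarrow> nat) set \<Rightarrow> nat set \<Rightarrow> (nat \<Rightarrow> nat) \<Rightarrow> (nat \<Rightarrow> nat) set" where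
  "prescribed T X \<phi> = {f \<in> T. \<forall>x\<in>X. f x = \<phi> x}"

lemma subsemiring_prescribed:
  assumes "subsemiring n T U"
    and "X \<subseteq> {..<n}" "\<phi> ` X \<subseteq> X" "\<And>x. x \<in> X \<Longrightarrow> \<phi> (\<phi> x) = \<phi> x"
    and "prescribed T X \<phi> \<noteq> {}"
  shows "subsemiring n (prescribed T X \<phi>) T"
proof -
  have "eplus n f g \<in> prescribed T X \<phi> \<and> etimes n f g \<in> prescribed T X \<phi>"
    if f: "f \<in> prescribed T X \<phi>" and g: "g \<in> prescribed T X \<phi>" for f g
  proof -
    have "eplus n f g x = \<phi> x" if "x \<in> X" for x
      using f g that assms(2) unfolding prescribed_def eplus_def by auto
    moreover have "etimes n f g x = \<phi> x" if "x \<in> X" for x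
    proof -
      have "\<phi> x \<in> X" using assms(3) that by blast
      then show ?thesis
        using f g that assms(2,4) unfolding prescribed_def etimes_def by auto
    qed
    moreover have "eplus n f g \<in> T" "etimes n f g \<in> T"
      using f g assms(1) unfolding prescribed_def subsemiring_def by auto
    ultimately show ?thesis unfolding prescribed_def by blast
  qed
  moreover have "prescribed T X \<phi> \<subseteq> T"
    unfolding prescribed_def by blast
  ultimately show ?thesis
    using assms(5) unfolding subsemiring_def by blast
qed

theorem proposition39:
  fixes n a b c :: nat
  assumes "a < b" and "b < c" and "c < n"
  shows "subsemiring n (Lpar n a b c) (triangle n a b c)
       \<and> subsemiring n (Rpar n a b c) (triangle n a b c)"
proof -
  let ?T = "triangle n a b c"
  let ?\<phi>L = "\<lambda>x. if x = a then a else b" and ?\<phi>R = "\<lambda>x. if x = c then c else b"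
  have T: "subsemiring n ?T (endo n)"
    using assms by (simp add: subsemiring_triangle_endo)
  have L: "Lpar n a b c = prescribed ?T {a, b, c} ?\<phi>L"
    and R: "Rpar n a b c = prescribed ?T {a, b, c} ?\<phi>R"
    using assms unfolding Lpar_def Rpar_def prescribed_def by force+
  have "(\<lambda>x. if x < n then if x \<le> a then a else b else 0) \<in> Lpar n a b c"
    using assms unfolding Lpar_def triangle_def endo_def by auto
  then have "subsemiring n (Lpar n a b c) ?T"
    unfolding L using assms by (intro subsemiring_prescribed[OF T]) auto
  moreover have "(\<lambda>x. if x < n then if x < c then b else c else 0) \<in> Rpar n a b c"
    using assms unfolding Rpar_def triangle_def endo_def by auto
  then have "subsemiring n (Rpar n a b c) ?T"
    unfolding R using assms by (intro subsemiring_prescribed[OF T]) auto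
  ultimately show ?thesis ..
qed

end
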